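(* Let $d_0,d_1$ be metrics on $\omega$. Then the completions of $\langle\omega,d_0\rangle$ and $\langle\omega,d_1\rangle$ are homeomorphic if and only if there are metrics $d'_0,d'_1$ on $\omega$ such that $d_e\preceq_{\mathrm{di}}d'_e$ for each $e\in\{0,1\}$ and there is a Cauchy-continuous bijection $g:\langle\omega,d'_0\rangle\to\langle\omega,d'_1\rangle$ whose inverse is Cauchy-continuous.
   Context: For metrics $d,d'$ on $\omega$, $d\preceq_{\mathrm{di}}d'$ means there is a dense isometry $\iota:\langle\omega,d\rangle\to\langle\omega,d'\rangle$, i.e. a distance-preserving map (not necessarily onto) with dense image. A function between metric spaces is Cauchy-continuous if it maps Cauchy sequences to Cauchy sequences. The completion of a metric space is a complete metric space together with a dense isometry from the space into it. *)

theory Defs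
  imports "HOL-Analysis.Analysis"
begin

definition metric_on_nat :: "(nat \<Rightarrow> nat \<Rightarrow> real) \<Rightarrow> bool" where
  "metric_on_nat d \<longleftrightarrow> Metric_space UNIV d"

definition dense_isometry :: "(nat \<Rightarrow> nat \<Rightarrow> real) \<Rightarrow> 'a metric \<Rightarrow> (nat \<Rightarrow> 'a) \<Rightarrow> bool" where
  "dense_isometry d m \<iota> \<longleftrightarrow>
     range \<iota> \<subseteq> mspace m \<and>
     (\<forall>x y. mdist m (\<iota> x) (\<iota> y) = d x y) \<and>
     (mtopology_of m) closure_of (range \<iota>) = mspace m"

definition di_le :: "(nat \<Rightarrow> nat \<Rightarrow> real) \<Rightarrow> (nat \<Rightarrow> nat \<Rightarrow> real) \<Rightarrow> bool" where
  "di_le d d' \<longleftrightarrow> (\<exists>\<iota>. dense_isometry d (metric (UNIV, d')) \<iota>)"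

definition is_completion :: "(nat \<Rightarrow> nat \<Rightarrow> real) \<Rightarrow> 'a metric \<Rightarrow> (nat \<Rightarrow> 'a) \<Rightarrow> bool" where
  "is_completion d m \<iota> \<longleftrightarrow> mcomplete_of m \<and> dense_isometry d m \<iota>"

end

theory Submission
  imports Defs
begin

(* If h : C0 -> C1 is a homeomorphism, enumerate the countable dense set
   range iota0 \<union> h^-1 (range iota1) of C0 and pull back the metric of C0 along the
   enumeration e and the metric of C1 along h o e.  Continuous maps out of complete
   spaces are Cauchy-continuous, so the identity of omega is Cauchy-continuous in both
   directions between the two pulled-back metrics.
   Conversely, since d_e embeds densely into d'_e, the embedding iota_e extends to a
   Cauchy-continuous map J_e : (omega, d'_e) -> C_e.  Extending J1 o g and J0 o g^-1
   over the completions gives continuous maps C0 -> C1 -> C0 that are inverse to each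
   other on the dense sets range iota_e, hence everywhere. *)

abbreviation MCauchy_of :: "'a metric \<Rightarrow> (nat \<Rightarrow> 'a) \<Rightarrow> bool" where
  "MCauchy_of m \<equiv> Metric_space.MCauchy (mspace m) (mdist m)"

lemma isometry_MCauchy_iff:
  assumes "\<And>x. x \<in> mspace m1 \<Longrightarrow> f x \<in> mspace m2"
    and "\<And>x y. x \<in> mspace m1 \<Longrightarrow> y \<in> mspace m1 \<Longrightarrow> mdist m2 (f x) (f y) = mdist m1 x y"
    and "range \<sigma> \<subseteq> mspace m1"
  shows "MCauchy_of m2 (f \<circ> \<sigma>) \<longleftrightarrow> MCauchy_of m1 \<sigma>"
  using assms
  by (auto simp: Metric_space.MCauchy_def[OF Metric_space_mspace_mdist] image_subset_iff)

lemma isometry_imp_Cauchy_continuous_map: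
  assumes "\<And>x. x \<in> mspace m1 \<Longrightarrow> f x \<in> mspace m2"
    and "\<And>x y. x \<in> mspace m1 \<Longrightarrow> y \<in> mspace m1 \<Longrightarrow> mdist m2 (f x) (f y) = mdist m1 x y"
  shows "Cauchy_continuous_map m1 m2 f"
  unfolding Cauchy_continuous_map_def
  using isometry_MCauchy_iff[OF assms]
  by (auto simp: Metric_space.MCauchy_def[OF Metric_space_mspace_mdist])

lemma mtopology_of_closure_of:
  "mtopology_of m closure_of S = {x \<in> mspace m. \<forall>r>0. \<exists>y\<in>S. y \<in> mspace m \<and> mdist m x y < r}"
  unfolding mtopology_of_def
  by (simp add: Metric_space.metric_closure_of[OF Metric_space_mspace_mdist]
      Metric_space.in_mball[OF Metric_space_mspace_mdist]) blast

lemma continuous_maps_eq_on_dense: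
  assumes "continuous_map (mtopology_of m) (mtopology_of m') f"
    and "continuous_map (mtopology_of m) (mtopology_of m') g"
    and "mtopology_of m closure_of S = mspace m"
    and "\<And>x. x \<in> S \<Longrightarrow> f x = g x"
    and "x \<in> mspace m"
  shows "f x = g x"
  using assms forall_in_closure_of_eq[of x "mtopology_of m" S "mtopology_of m'" f g]
  by (simp add: mtopology_of_def Metric_space.Hausdorff_space_mtopology)

lemma homeomorphic_maps_if_inverse_on_dense:
  assumes f: "continuous_map (mtopology_of m) (mtopology_of m') f"
    and g: "continuous_map (mtopology_of m') (mtopology_of m) g"
    and S: "mtopology_of m closure_of S = mspace m" "\<And>x. x \<in> S \<Longrightarrow> g (f x) = x"
    and T: "mtopology_of m' closure_of T = mspace m'" "\<And>y. y \<in> T \<Longrightarrow> f (g y) = y"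
  shows "homeomorphic_maps (mtopology_of m) (mtopology_of m') f g"
proof -
  have "(g \<circ> f) x = id x" if "x \<in> mspace m" for x
    using continuous_maps_eq_on_dense[OF continuous_map_compose[OF f g] continuous_map_id S(1)] S(2) that
    by simp
  moreover have "(f \<circ> g) y = id y" if "y \<in> mspace m'" for y
    using continuous_maps_eq_on_dense[OF continuous_map_compose[OF g f] continuous_map_id T(1)] T(2) that
    by simp
  ultimately show ?thesis
    using f g by (auto simp: homeomorphic_maps_def)
qed

lemma dense_isometry_inj:
  assumes "Metric_space UNIV d" "dense_isometry d m a"
  shows "inj a"
proof
  fix x y assume "a x = a y"
  moreover have "a x \<in> mspace m"
    using assms(2) by (auto simp: dense_isometry_def)
  ultimately have "d x y = 0"
    using assms(2) by (metis dense_isometry_def mdist_zero)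
  then show "x = y"
    using Metric_space.zero[OF assms(1)] by simp
qed

lemma dense_isometry_imp_Cauchy_continuous_map:
  assumes "Metric_space UNIV d" "dense_isometry d m a"
  shows "Cauchy_continuous_map (metric (UNIV, d)) m a"
  using assms
  by (intro isometry_imp_Cauchy_continuous_map)
     (auto simp: dense_isometry_def Metric_space.mdist_metric)

lemma dense_isometry_extends_Cauchy_continuous:
  assumes d: "Metric_space UNIV d" and a: "dense_isometry d m a"
    and m': "mcomplete_of m'" and \<phi>: "Cauchy_continuous_map (metric (UNIV, d)) m' \<phi>"
  obtains \<Phi> where "Cauchy_continuous_map m m' \<Phi>" "\<And>n. \<Phi> (a n) = \<phi> n"
proof -
  have inj: "inj a"
    by (rule dense_isometry_inj[OF d a])
  have "Cauchy_continuous_map (submetric m (range a)) (metric (UNIV, d)) (inv a)"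
    using inj a
    by (intro isometry_imp_Cauchy_continuous_map)
       (auto simp: dense_isometry_def Metric_space.mdist_metric[OF d] Metric_space.mspace_metric[OF d])
  then have "Cauchy_continuous_map (submetric m (range a)) m' (\<phi> \<circ> inv a)"
    using \<phi> Cauchy_continuous_map_compose by blast
  then obtain \<Phi> where "Cauchy_continuous_map (submetric m (mtopology_of m closure_of range a)) m' \<Phi>"
      "\<And>x. x \<in> range a \<Longrightarrow> \<Phi> x = (\<phi> \<circ> inv a) x"
    using Cauchy_continuous_map_extends_to_closure_of m' by blast
  with a inj show thesis
    using that by (simp add: dense_isometry_def)
qed

lemma Cauchy_continuous_map_extends_to_completions:
  assumes d0: "Metric_space UNIV d0" and d0': "Metric_space UNIV d0'"
    and a0: "dense_isometry d0 (metric (UNIV, d0')) a0" and \<iota>0: "dense_isometry d0 C0 \<iota>0"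
    and J0: "Cauchy_continuous_map (metric (UNIV, d0')) C0 J0" "\<And>n. J0 (a0 n) = \<iota>0 n"
    and J1: "Cauchy_continuous_map (metric (UNIV, d1')) C1 J1" and C1: "mcomplete_of C1"
    and g: "Cauchy_continuous_map (metric (UNIV, d0')) (metric (UNIV, d1')) g"
  obtains F where "continuous_map (mtopology_of C0) (mtopology_of C1) F" "\<And>x. F (J0 x) = J1 (g x)"
proof -
  have "Cauchy_continuous_map (metric (UNIV, d0)) C1 (J1 \<circ> g \<circ> a0)"
    by (intro Cauchy_continuous_map_compose[OF dense_isometry_imp_Cauchy_continuous_map[OF d0 a0]]
        Cauchy_continuous_map_compose[OF g J1])
  then obtain F where F: "Cauchy_continuous_map C0 C1 F" "\<And>n. F (\<iota>0 n) = J1 (g (a0 n))"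
    using dense_isometry_extends_Cauchy_continuous[OF d0 \<iota>0 C1] by (metis comp_apply)
  have "(F \<circ> J0) x = (J1 \<circ> g) x" for x
  proof (rule continuous_maps_eq_on_dense[where S = "range a0"])
    show "mtopology_of (metric (UNIV, d0')) closure_of range a0 = mspace (metric (UNIV, d0'))"
      using a0 by (simp add: dense_isometry_def)
    show "continuous_map (mtopology_of (metric (UNIV, d0'))) (mtopology_of C1) (F \<circ> J0)"
      using F(1) J0(1) by (meson Cauchy_continuous_imp_continuous_map Cauchy_continuous_map_compose)
    show "continuous_map (mtopology_of (metric (UNIV, d0'))) (mtopology_of C1) (J1 \<circ> g)"
      using g J1 by (meson Cauchy_continuous_imp_continuous_map Cauchy_continuous_map_compose)
  qed (use F(2) J0(2) Metric_space.mspace_metric[OF d0'] in auto)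
  with F show thesis
    using that Cauchy_continuous_imp_continuous_map by (metis comp_apply)
qed

lemma homeomorphic_completions_if_Cauchy_homeomorphic:
  assumes d0: "Metric_space UNIV d0" and d1: "Metric_space UNIV d1"
    and c0: "is_completion d0 C0 \<iota>0" and c1: "is_completion d1 C1 \<iota>1"
    and d0': "Metric_space UNIV d0'" and d1': "Metric_space UNIV d1'"
    and a0: "dense_isometry d0 (metric (UNIV, d0')) a0"
    and a1: "dense_isometry d1 (metric (UNIV, d1')) a1"
    and g: "bij g" "Cauchy_continuous_map (metric (UNIV, d0')) (metric (UNIV, d1')) g"
      "Cauchy_continuous_map (metric (UNIV, d1')) (metric (UNIV, d0')) (inv g)"
  shows "mtopology_of C0 homeomorphic_space mtopology_of C1"
proof -
  have \<iota>0: "dense_isometry d0 C0 \<iota>0" and \<iota>1: "dense_isometry d1 C1 \<iota>1"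
    and C0: "mcomplete_of C0" and C1: "mcomplete_of C1"
    using c0 c1 by (auto simp: is_completion_def)
  obtain J0 where J0: "Cauchy_continuous_map (metric (UNIV, d0')) C0 J0" "\<And>n. J0 (a0 n) = \<iota>0 n"
    using dense_isometry_extends_Cauchy_continuous[OF d0 a0 C0]
      dense_isometry_imp_Cauchy_continuous_map[OF d0 \<iota>0] by blast
  obtain J1 where J1: "Cauchy_continuous_map (metric (UNIV, d1')) C1 J1" "\<And>n. J1 (a1 n) = \<iota>1 n"
    using dense_isometry_extends_Cauchy_continuous[OF d1 a1 C1]
      dense_isometry_imp_Cauchy_continuous_map[OF d1 \<iota>1] by blast
  obtain F where F: "continuous_map (mtopology_of C0) (mtopology_of C1) F" "\<And>x. F (J0 x) = J1 (g x)"
    using Cauchy_continuous_map_extends_to_completions[OF d0 d0' a0 \<iota>0 J0 J1(1) C1 g(2)] by blast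
  obtain G where G: "continuous_map (mtopology_of C1) (mtopology_of C0) G"
      "\<And>y. G (J1 y) = J0 (inv g y)"
    using Cauchy_continuous_map_extends_to_completions[OF d1 d1' a1 \<iota>1 J1 J0(1) C0 g(3)] by blast
  have "G (F (\<iota>0 n)) = \<iota>0 n" for n
    using F(2) G(2) J0(2)[symmetric] bij_is_inj[OF g(1)] by simp
  moreover have "F (G (\<iota>1 n)) = \<iota>1 n" for n
    using F(2) G(2) J1(2)[symmetric] bij_is_surj[OF g(1)] by (simp add: surj_f_inv_f)
  ultimately have "homeomorphic_maps (mtopology_of C0) (mtopology_of C1) F G"
    using \<iota>0 \<iota>1 F(1) G(1) by (intro homeomorphic_maps_if_inverse_on_dense) (auto simp: dense_isometry_def)
  then show ?thesis
    by (rule homeomorphic_maps_imp_homeomorphic_space)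
qed

definition pullback_dist :: "'a metric \<Rightarrow> ('b \<Rightarrow> 'a) \<Rightarrow> 'b \<Rightarrow> 'b \<Rightarrow> real" where
  "pullback_dist m e x y = mdist m (e x) (e y)"

lemma Metric_space_pullback_dist:
  assumes "inj e" "range e \<subseteq> mspace m"
  shows "Metric_space UNIV (pullback_dist m e)"
proof
  fix x y z
  show "0 \<le> pullback_dist m e x y"
    by (simp add: pullback_dist_def)
  show "pullback_dist m e x y = pullback_dist m e y x"
    by (simp add: pullback_dist_def mdist_commute)
  show "pullback_dist m e x y = 0 \<longleftrightarrow> x = y"
    using assms by (auto simp: pullback_dist_def inj_eq image_subset_iff)
  show "pullback_dist m e x z \<le> pullback_dist m e x y + pullback_dist m e y z"
    using assms by (auto simp: pullback_dist_def intro: mdist_triangle)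
qed

lemma MCauchy_pullback_dist_iff:
  assumes "inj e" "range e \<subseteq> mspace m"
  shows "MCauchy_of (metric (UNIV, pullback_dist m e)) \<sigma> \<longleftrightarrow> MCauchy_of m (e \<circ> \<sigma>)"
proof -
  interpret Metric_space UNIV "pullback_dist m e"
    using Metric_space_pullback_dist[OF assms] .
  show ?thesis
    using assms by (subst isometry_MCauchy_iff[symmetric, of _ e]) (auto simp: pullback_dist_def)
qed

lemma Cauchy_continuous_map_id_pullback_dist:
  assumes e: "inj e" "range e \<subseteq> mspace m" and fe: "inj (f \<circ> e)" "range (f \<circ> e) \<subseteq> mspace m'"
    and f: "Cauchy_continuous_map m m' f"
  shows "Cauchy_continuous_map (metric (UNIV, pullback_dist m e)) (metric (UNIV, pullback_dist m' (f \<circ> e))) id"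
  using f unfolding Cauchy_continuous_map_def
  by (simp add: MCauchy_pullback_dist_iff[OF e] MCauchy_pullback_dist_iff[OF fe] comp_assoc)

lemma dense_isometry_into_pullback_dist:
  assumes e: "inj e" "range e \<subseteq> mspace m"
    and \<iota>: "dense_isometry d m \<iota>" "range \<iota> \<subseteq> range e"
  shows "dense_isometry d (metric (UNIV, pullback_dist m e)) (inv e \<circ> \<iota>)"
proof -
  interpret Metric_space UNIV "pullback_dist m e"
    using Metric_space_pullback_dist[OF e] .
  have e_inv: "e (inv e (\<iota> n)) = \<iota> n" for n
    using \<iota>(2) by (metis f_inv_into_f range_subsetD)
  have "\<exists>n. pullback_dist m e x (inv e (\<iota> n)) < r" if "r > 0" for x r
  proof -
    have "e x \<in> mtopology_of m closure_of range \<iota>"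
      using e \<iota>(1) by (auto simp: dense_isometry_def)
    then obtain n where "mdist m (e x) (\<iota> n) < r"
      using \<open>r > 0\<close> by (auto simp: mtopology_of_closure_of)
    then show ?thesis
      by (auto simp: pullback_dist_def e_inv)
  qed
  then have "mtopology closure_of range (inv e \<circ> \<iota>) = UNIV"
    by (fastforce simp: metric_closure_of)
  then show ?thesis
    using \<iota>(1) by (auto simp: dense_isometry_def pullback_dist_def e_inv)
qed

lemma Cauchy_homeomorphic_refinements_if_homeomorphic_completions:
  assumes d0: "Metric_space UNIV d0"
    and c0: "is_completion d0 C0 \<iota>0" and c1: "is_completion d1 C1 \<iota>1"
    and "mtopology_of C0 homeomorphic_space mtopology_of C1"
  shows "\<exists>d0' d1'. metric_on_nat d0' \<and> metric_on_nat d1' \<and> di_le d0 d0' \<and> di_le d1 d1' \<and>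
       (\<exists>g. bij g \<and>
          Cauchy_continuous_map (metric (UNIV, d0')) (metric (UNIV, d1')) g \<and>
          Cauchy_continuous_map (metric (UNIV, d1')) (metric (UNIV, d0')) (inv g))"
proof -
  obtain h k where hk: "homeomorphic_maps (mtopology_of C0) (mtopology_of C1) h k"
    using assms(4) homeomorphic_space_def by blast
  then have h: "continuous_map (mtopology_of C0) (mtopology_of C1) h"
    and k: "continuous_map (mtopology_of C1) (mtopology_of C0) k"
    and kh: "\<And>x. x \<in> mspace C0 \<Longrightarrow> k (h x) = x"
    and hk: "\<And>y. y \<in> mspace C1 \<Longrightarrow> h (k y) = y"
    by (auto simp: homeomorphic_maps_def)
  have \<iota>0: "dense_isometry d0 C0 \<iota>0" and \<iota>1: "dense_isometry d1 C1 \<iota>1"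
    and C0: "mcomplete_of C0" and C1: "mcomplete_of C1"
    using c0 c1 by (auto simp: is_completion_def)
  have hC: "h x \<in> mspace C1" if "x \<in> mspace C0" for x
    using continuous_map_funspace[OF h] that by auto
  have kC: "k y \<in> mspace C0" if "y \<in> mspace C1" for y
    using continuous_map_funspace[OF k] that by auto
  define D where "D = range \<iota>0 \<union> k ` range \<iota>1"
  have "infinite (range \<iota>0)"
    using dense_isometry_inj[OF d0 \<iota>0] by (simp add: finite_image_iff)
  then have "countable D" "infinite D"
    by (auto simp: D_def)
  then obtain e :: "nat \<Rightarrow> _" where "bij_betw e UNIV D"
    by (rule countable_infiniteE')
  then have e: "inj e" "range e \<subseteq> mspace C0" and D: "range e = D"
    using \<iota>0 \<iota>1 kC by (auto simp: bij_betw_def D_def dense_isometry_def)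
  have "inj_on h (mspace C0)"
    using kh by (rule inj_on_inverseI)
  then have he: "inj (h \<circ> e)" "range (h \<circ> e) \<subseteq> mspace C1"
    using e hC by (auto intro: comp_inj_on inj_on_subset)
  have "\<iota>1 n \<in> range (h \<circ> e)" for n
  proof -
    have "\<iota>1 n \<in> mspace C1"
      using \<iota>1 by (auto simp: dense_isometry_def)
    moreover obtain m where "k (\<iota>1 n) = e m"
      using D by (metis D_def UnI2 rangeE rangeI image_eqI)
    ultimately show ?thesis
      using hk by (metis comp_apply rangeI)
  qed
  then have "range \<iota>1 \<subseteq> range (h \<circ> e)"
    by blast
  then have "di_le d1 (pullback_dist C1 (h \<circ> e))"
    using dense_isometry_into_pullback_dist[OF he \<iota>1] by (auto simp: di_le_def)
  moreover have "di_le d0 (pullback_dist C0 e)"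
    using dense_isometry_into_pullback_dist[OF e \<iota>0] D by (auto simp: di_le_def D_def)
  moreover have "Cauchy_continuous_map (metric (UNIV, pullback_dist C0 e))
      (metric (UNIV, pullback_dist C1 (h \<circ> e))) id"
    using C0 h by (intro Cauchy_continuous_map_id_pullback_dist e he continuous_imp_Cauchy_continuous_map)
      (auto simp: mcomplete_of_def)
  moreover have "Cauchy_continuous_map (metric (UNIV, pullback_dist C1 (h \<circ> e)))
      (metric (UNIV, pullback_dist C0 e)) id"
  proof -
    have "k \<circ> (h \<circ> e) = e"
      using kh e by (auto simp: image_subset_iff)
    then show ?thesis
      using Cauchy_continuous_map_id_pullback_dist[OF he, of k C0] e C1 k
      by (simp add: continuous_imp_Cauchy_continuous_map mcomplete_of_def)
  qed
  ultimately show ?thesis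
    using Metric_space_pullback_dist[OF e] Metric_space_pullback_dist[OF he] bij_id inv_id
    unfolding metric_on_nat_def by metis
qed

theorem theorem4p7:
  fixes d0 d1 :: "nat \<Rightarrow> nat \<Rightarrow> real"
    and C0 :: "'a metric" and \<iota>0 :: "nat \<Rightarrow> 'a"
    and C1 :: "'b metric" and \<iota>1 :: "nat \<Rightarrow> 'b"
  assumes "metric_on_nat d0" and "metric_on_nat d1"
    and "is_completion d0 C0 \<iota>0" and "is_completion d1 C1 \<iota>1"
  shows "(mtopology_of C0 homeomorphic_space mtopology_of C1) \<longleftrightarrow>
    (\<exists>d0' d1'. metric_on_nat d0' \<and> metric_on_nat d1' \<and> di_le d0 d0' \<and> di_le d1 d1' \<and>
       (\<exists>g. bij g \<and>
          Cauchy_continuous_map (metric (UNIV, d0')) (metric (UNIV, d1')) g \<and>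
          Cauchy_continuous_map (metric (UNIV, d1')) (metric (UNIV, d0')) (inv g)))"
  using Cauchy_homeomorphic_refinements_if_homeomorphic_completions
      [OF assms(1)[unfolded metric_on_nat_def] assms(3,4)]
    homeomorphic_completions_if_Cauchy_homeomorphic
      [OF assms(1,2)[unfolded metric_on_nat_def] assms(3,4)]
  unfolding metric_on_nat_def di_le_def by blast

end
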